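(* Let $\Gamma(t)=\lim_{n\to\infty}\frac1n\log\mathbb{E}(e^{tH_n})$ and $p^*=\frac{a_0}{1-\sum_{i=1}^\infty a_i}$. Then: (1) for $t\ge0$, $$\log\big(1+(e^t-1)p^*\big)\le\Gamma(t)\le\log\Big(1+(e^t-1)\sum_{i=0}^\infty a_i\Big);$$ (2) for $t<0$, $$\max\Big\{\log\big(1+(e^t-1)p^*\big),\ \log(1-a_0)\Big\}\le\Gamma(t)\le\log\big(1+(e^t-1)a_0\big).$$
   Context: Standing setup (discrete-time Hawkes process, DTHP). Let $(a_i)_{i=0}^\infty$ be a sequence of strictly positive real numbers with $\sum_{i=0}^\infty a_i<1$ and $\sum_{i=1}^\infty i\,a_i<\infty$. The arrival process $\{\xi_n\}_{n\ge1}$ is a sequence of $\{0,1\}$-valued random variables on a probability space $(\Omega,\mathcal F,\mathbb P)$ with $\mathbb{P}(\xi_1=1)=a_0$, $\mathbb P(\xi_1=0)=1-a_0$, and for $n\ge2$, $$\mathbb{P}(\xi_n=1\mid \xi_1,\dots,\xi_{n-1})=a_0+\sum_{i=1}^{n-1}a_{n-i}\xi_i,\qquad \mathbb{P}(\xi_n=0\mid \xi_1,\dots,\xi_{n-1})=1-\Big(a_0+\sum_{i=1}^{n-1}a_{n-i}\xi_i\Big).$$ The DTHP is $H_n=\sum_{i=1}^n\xi_i$, and $\mathcal F_n=\sigma(\xi_1,\dots,\xi_n)$. The limit $\Gamma(t)$ exists for every $t$. One may use that $\xi_1,\dots,\xi_n$ are associated random variables for each $n$ (a fact known from the literature). *)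

theory Defs
  imports "HOL-Probability.Probability"
begin

definition bind01 :: "bool \<Rightarrow> real" where
  "bind01 b = (if b then 1 else 0)"

definition dthp_intensity :: "(nat \<Rightarrow> real) \<Rightarrow> nat \<Rightarrow> (nat \<Rightarrow> bool) \<Rightarrow> real" where
  "dthp_intensity a n x = a 0 + (\<Sum>i\<in>{1..<n}. a (n - i) * bind01 (x i))"

text \<open>The arrival process xi (indexed from 1) on the probability space M is a DTHP with
  kernel a: each xi i is a random variable, and for every n \<ge> 1 and every possible past
  x 1, ..., x (n-1), P(xi n = 1 and xi i = x i for i < n) equals the intensity times
  P(xi i = x i for i < n) (elementary conditional probability given the discrete past;
  for n = 1 this reads P(xi 1 = 1) = a 0).\<close>
definition is_DTHP :: "'w measure \<Rightarrow> (nat \<Rightarrow> real) \<Rightarrow> (nat \<Rightarrow> 'w \<Rightarrow> bool) \<Rightarrow> bool" where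
  "is_DTHP M a \<xi> \<longleftrightarrow> prob_space M \<and>
     (\<forall>i. \<xi> i \<in> measurable M (count_space UNIV)) \<and>
     (\<forall>n\<ge>1. \<forall>x. measure M {\<omega>\<in>space M. (\<forall>i\<in>{1..<n}. \<xi> i \<omega> = x i) \<and> \<xi> n \<omega>}
        = dthp_intensity a n x * measure M {\<omega>\<in>space M. \<forall>i\<in>{1..<n}. \<xi> i \<omega> = x i})"

definition dthp_H :: "(nat \<Rightarrow> 'w \<Rightarrow> bool) \<Rightarrow> nat \<Rightarrow> 'w \<Rightarrow> real" where
  "dthp_H \<xi> n \<omega> = (\<Sum>i\<in>{1..n}. bind01 (\<xi> i \<omega>))"

end

theory Submission
  imports Defs
begin

(* Write Z n = E exp (t H n). Conditioning on the past gives
   Z (n+1) = E [exp (t H n) (1 + (exp t - 1) lambda (n+1))], where lambda is the intensity; bounding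
   lambda between a 0 and the sum of all a i yields Z n <= c ^ n and hence the upper bounds.
   For the lower bounds, exp (t H n) and exp (t xi (n+1)) are monotone in the same direction as
   functions of the history, so by the Harris-FKG inequality
   Z (n+1) >= Z n (1 + (exp t - 1) r n) with r n = P (xi (n+1)). The arrival probabilities r solve the
   renewal equation r m = a 0 + sum (k < m) a (m - k) r k, hence increase to pstar, and a Cesaro
   argument gives ln (1 + (exp t - 1) pstar) <= Gamma. Finally Z n >= P (H n = 0) = (1 - a 0) ^ n. *)

lemma cesaro_LIMSEQ:
  fixes X :: "nat \<Rightarrow> real"
  assumes lim: "X \<longlonglongrightarrow> L"
  shows "(\<lambda>n. (\<Sum>k<n. X k) / real n) \<longlonglongrightarrow> L"
proof (rule LIMSEQ_I)
  fix e :: real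
  assume "0 < e"
  then obtain N where N: "\<And>k. N \<le> k \<Longrightarrow> \<bar>X k - L\<bar> < e / 2"
    using LIMSEQ_D[OF lim, of "e / 2"] by auto
  define C where "C = (\<Sum>k<N. \<bar>X k - L\<bar>)"
  obtain m where m: "2 * C / e < real m"
    using reals_Archimedean2 by blast
  show "\<exists>n0. \<forall>n\<ge>n0. norm ((\<Sum>k<n. X k) / real n - L) < e"
  proof (intro exI allI impI)
    fix n
    assume n: "max (Suc m) N \<le> n"
    have "\<bar>(\<Sum>k<n. X k) - real n * L\<bar> = \<bar>\<Sum>k<n. X k - L\<bar>"
      by (simp add: sum_subtractf)
    also have "\<dots> \<le> (\<Sum>k<n. \<bar>X k - L\<bar>)"
      by (rule sum_abs)
    also have "\<dots> = C + (\<Sum>k\<in>{N..<n}. \<bar>X k - L\<bar>)"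
      using n by (simp add: C_def atLeast0LessThan[symmetric] sum.atLeastLessThan_concat)
    also have "\<dots> \<le> C + real n * (e / 2)"
    proof -
      have "(\<Sum>k\<in>{N..<n}. \<bar>X k - L\<bar>) \<le> (\<Sum>k\<in>{N..<n}. e / 2)"
        using N by (intro sum_mono) (auto intro: less_imp_le)
      also have "\<dots> \<le> real n * (e / 2)"
        using \<open>0 < e\<close> by simp
      finally show ?thesis by simp
    qed
    also have "\<dots> < real n * e"
    proof -
      have "2 * C < e * real m"
        using m \<open>0 < e\<close> by (simp add: field_simps)
      also have "\<dots> \<le> e * real n"
        using n \<open>0 < e\<close> by simp
      finally show ?thesis by (simp add: field_simps)
    qed
    finally have "\<bar>(\<Sum>k<n. X k) - real n * L\<bar> < real n * e" .
    moreover have "0 < real n"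
      using n by simp
    ultimately show "norm ((\<Sum>k<n. X k) / real n - L) < e"
      by (simp add: field_simps)
  qed
qed

lemma growth_rate_le_ln:
  fixes Z :: "nat \<Rightarrow> real"
  assumes lim: "(\<lambda>n. ln (Z n) / real n) \<longlonglongrightarrow> \<Gamma>"
    and Z_pos: "\<And>n. 0 < Z n" and Z_le: "\<And>n. Z n \<le> c ^ n"
  shows "\<Gamma> \<le> ln c"
proof (rule LIMSEQ_le_const2[OF lim], intro exI allI impI)
  fix n :: nat
  assume "1 \<le> n"
  have "ln (Z n) \<le> ln (c ^ n)"
    by (rule ln_mono[OF Z_le Z_pos])
  also have "\<dots> = real n * ln c"
    by (rule ln_realpow)
  finally show "ln (Z n) / real n \<le> ln c"
    using \<open>1 \<le> n\<close> by (simp add: divide_le_eq mult.commute)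
qed

lemma ln_le_growth_rate:
  fixes Z f :: "nat \<Rightarrow> real"
  assumes lim: "(\<lambda>n. ln (Z n) / real n) \<longlonglongrightarrow> \<Gamma>"
    and f_pos: "\<And>k. 0 < f k" and f_lim: "f \<longlonglongrightarrow> c" and "0 < c"
    and prod_le: "\<And>n. (\<Prod>k<n. f k) \<le> Z n"
  shows "ln c \<le> \<Gamma>"
proof (rule LIMSEQ_le[OF cesaro_LIMSEQ lim])
  show "(\<lambda>k. ln (f k)) \<longlonglongrightarrow> ln c"
    using f_lim \<open>0 < c\<close> by (intro tendsto_ln) auto
  show "\<exists>N. \<forall>n\<ge>N. (\<Sum>k<n. ln (f k)) / real n \<le> ln (Z n) / real n"
  proof (intro exI allI impI)
    fix n :: nat
    have "(\<Sum>k<n. ln (f k)) = ln (\<Prod>k<n. f k)"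
      using f_pos by (simp add: ln_prod less_imp_neq[symmetric])
    also have "\<dots> \<le> ln (Z n)"
      using prod_le f_pos by (intro ln_mono prod_pos) (auto intro: less_imp_le)
    finally show "(\<Sum>k<n. ln (f k)) / real n \<le> ln (Z n) / real n"
      by (rule divide_right_mono) simp
  qed
qed

lemma bernoulli_mgf_pos:
  fixes p t :: real
  assumes "0 \<le> p" "p \<le> 1"
  shows "0 < 1 + (exp t - 1) * p"
proof -
  have "1 + (exp t - 1) * p = (1 - p) + p * exp t"
    by (simp add: algebra_simps)
  moreover have "0 < (1 - p) + p * exp t"
    using assms by (cases "p = 0") (auto intro: add_nonneg_pos)
  ultimately show ?thesis by simp
qed

locale renewal =
  fixes a r :: "nat \<Rightarrow> real"
  assumes a_nonneg: "\<And>i. 0 \<le> a i"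
    and summable_a: "summable a"
    and suminf_a_less_1: "(\<Sum>i. a i) < 1"
    and r_eq: "\<And>m. r m = a 0 + (\<Sum>k<m. a (m - k) * r k)"
begin

definition pstar :: real where
  "pstar = a 0 / (1 - (\<Sum>i. a (Suc i)))"

lemma summable_a_Suc: "summable (\<lambda>i. a (Suc i))"
  using summable_a by (simp add: summable_Suc_iff)

lemma suminf_a_Suc: "(\<Sum>i. a (Suc i)) = (\<Sum>i. a i) - a 0"
  by (rule suminf_split_head[OF summable_a])

lemma sum_a_Suc_le: "(\<Sum>j<m. a (Suc j)) \<le> (\<Sum>i. a (Suc i))"
  by (rule sum_le_suminf[OF summable_a_Suc]) (auto intro: a_nonneg)

lemma suminf_a_Suc_less_1: "(\<Sum>i. a (Suc i)) < 1"
  using suminf_a_Suc suminf_a_less_1 a_nonneg[of 0] by linarith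

lemma a_0_less_1: "a 0 < 1"
  using suminf_a_Suc suminf_a_less_1 suminf_nonneg[OF summable_a_Suc a_nonneg] by linarith

lemma pstar_fixpoint: "a 0 + pstar * (\<Sum>i. a (Suc i)) = pstar"
  using suminf_a_Suc_less_1 unfolding pstar_def by (simp add: field_simps)

lemma pstar_nonneg: "0 \<le> pstar"
  using suminf_a_Suc_less_1 a_nonneg[of 0] unfolding pstar_def by simp

lemma pstar_less_1: "pstar < 1"
  using suminf_a_Suc_less_1 suminf_a_less_1 unfolding pstar_def suminf_a_Suc
  by (simp add: divide_less_eq)

lemma sum_a_rev: "(\<Sum>k<m. a (m - k)) = (\<Sum>j<m. a (Suc j))"
proof -
  have "(\<Sum>k<m. a (m - k)) = (\<Sum>k<m. (\<lambda>j. a (Suc j)) (m - Suc k))"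
    by (rule sum.cong) (auto simp: Suc_diff_Suc)
  also have "\<dots> = (\<Sum>j<m. a (Suc j))"
    by (rule sum.nat_diff_reindex)
  finally show ?thesis .
qed

lemma r_nonneg: "0 \<le> r m"
proof (induction m rule: less_induct)
  case (less m)
  then have "0 \<le> (\<Sum>k<m. a (m - k) * r k)"
    by (auto intro!: sum_nonneg mult_nonneg_nonneg a_nonneg)
  with a_nonneg[of 0] show ?case
    by (subst r_eq) simp
qed

lemma r_le_pstar: "r m \<le> pstar"
proof (induction m rule: less_induct)
  case (less m)
  have "(\<Sum>k<m. a (m - k) * r k) \<le> (\<Sum>k<m. a (m - k) * pstar)"
    using less by (intro sum_mono mult_left_mono a_nonneg) auto
  also have "\<dots> = pstar * (\<Sum>j<m. a (Suc j))"
    by (simp add: sum_distrib_left sum_a_rev[symmetric] mult.commute)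
  also have "\<dots> \<le> pstar * (\<Sum>i. a (Suc i))"
    by (rule mult_left_mono[OF sum_a_Suc_le pstar_nonneg])
  finally show ?case
    using pstar_fixpoint by (subst r_eq) linarith
qed

lemma r_le_Suc: "r m \<le> r (Suc m)"
proof (induction m rule: less_induct)
  case (less m)
  have "(\<Sum>k<m. a (m - k) * r k) \<le> (\<Sum>k<m. a (m - k) * r (Suc k))"
    using less by (intro sum_mono mult_left_mono a_nonneg) auto
  also have "\<dots> \<le> a (Suc m) * r 0 + (\<Sum>k<m. a (Suc m - Suc k) * r (Suc k))"
    using a_nonneg r_nonneg by simp
  also have "\<dots> = (\<Sum>k<Suc m. a (Suc m - k) * r k)"
    by (simp only: sum.lessThan_Suc_shift) simp
  finally show ?case
    by (subst (1 2) r_eq) simp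
qed

lemma incseq_r: "incseq r"
  by (rule incseq_SucI) (rule r_le_Suc)

lemma r_shift_ge: "a 0 + (\<Sum>j<K. a (Suc j)) * r n \<le> r (K + n)"
proof -
  have "(\<Sum>j<K. a (Suc j)) = (\<Sum>k\<in>{n..<K + n}. a (K + n - k))"
    using sum.shift_bounds_nat_ivl[of "\<lambda>k. a (K + n - k)" 0 n K]
    by (simp add: atLeast0LessThan sum_a_rev)
  then have "(\<Sum>j<K. a (Suc j)) * r n = (\<Sum>k\<in>{n..<K + n}. a (K + n - k) * r n)"
    by (simp add: sum_distrib_right)
  also have "\<dots> \<le> (\<Sum>k\<in>{n..<K + n}. a (K + n - k) * r k)"
    by (intro sum_mono mult_left_mono a_nonneg) (auto intro: incseqD[OF incseq_r])
  also have "\<dots> \<le> (\<Sum>k<K + n. a (K + n - k) * r k)"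
    by (intro sum_mono2) (auto intro: mult_nonneg_nonneg a_nonneg r_nonneg)
  finally show ?thesis
    by (subst r_eq) simp
qed

lemma r_tendsto_pstar: "r \<longlonglongrightarrow> pstar"
proof -
  obtain L where L: "r \<longlonglongrightarrow> L" "\<And>i. r i \<le> L"
    using incseq_convergent[OF incseq_r] r_le_pstar by blast
  have "L \<le> pstar"
    by (rule LIMSEQ_le_const2[OF L(1)]) (auto intro: r_le_pstar)
  have "a 0 + (\<Sum>j<K. a (Suc j)) * L \<le> L" for K
  proof (rule LIMSEQ_le_const2)
    show "(\<lambda>n. a 0 + (\<Sum>j<K. a (Suc j)) * r n) \<longlonglongrightarrow> a 0 + (\<Sum>j<K. a (Suc j)) * L"
      by (intro tendsto_intros L(1))
    show "\<exists>N. \<forall>n\<ge>N. a 0 + (\<Sum>j<K. a (Suc j)) * r n \<le> L"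
      using r_shift_ge L(2) order.trans by blast
  qed
  then have "a 0 + (\<Sum>i. a (Suc i)) * L \<le> L"
  proof (intro LIMSEQ_le_const2)
    show "(\<lambda>K. a 0 + (\<Sum>j<K. a (Suc j)) * L) \<longlonglongrightarrow> a 0 + (\<Sum>i. a (Suc i)) * L"
      by (intro tendsto_intros summable_LIMSEQ[OF summable_a_Suc])
  qed auto
  then have "pstar \<le> L"
    using suminf_a_Suc_less_1 unfolding pstar_def by (simp add: divide_le_eq algebra_simps)
  with \<open>L \<le> pstar\<close> L(1) show ?thesis
    by simp
qed

end

definition histories :: "nat \<Rightarrow> (nat \<Rightarrow> bool) set" where
  "histories n = {x. \<forall>i. x i \<longrightarrow> i \<in> {1..n}}"

lemma histories_0: "histories 0 = {\<lambda>_. False}"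
  by (auto simp: histories_def fun_eq_iff)

lemma histories_not_Suc: "x \<in> histories n \<Longrightarrow> \<not> x (Suc n)"
  by (auto simp: histories_def)

lemma histories_Suc:
  "histories (Suc n) = histories n \<union> (\<lambda>x. x(Suc n := True)) ` histories n"
proof
  show "histories (Suc n) \<subseteq> histories n \<union> (\<lambda>x. x(Suc n := True)) ` histories n"
  proof
    fix x
    assume "x \<in> histories (Suc n)"
    then have past: "x(Suc n := False) \<in> histories n"
      by (auto simp: histories_def le_Suc_eq)
    show "x \<in> histories n \<union> (\<lambda>x. x(Suc n := True)) ` histories n"
    proof (cases "x (Suc n)")
      case True
      then have "x = (x(Suc n := False))(Suc n := True)"
        by (simp add: fun_eq_iff)
      with past show ?thesis by blast
    next
      case False
      then show ?thesis
        using past by (simp add: fun_upd_idem)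
    qed
  qed
qed (auto simp: histories_def split: if_splits)

lemma finite_histories: "finite (histories n)"
  by (induction n) (simp_all add: histories_0 histories_Suc)

lemma sum_histories_Suc:
  "(\<Sum>x\<in>histories (Suc n). h x) = (\<Sum>x\<in>histories n. h x + h (x(Suc n := True)))"
proof -
  let ?u = "\<lambda>x. x(Suc n := True)"
  have disjoint: "histories n \<inter> ?u ` histories n = {}"
    using histories_not_Suc by fastforce
  have "inj_on ?u (histories n)"
  proof (rule inj_onI)
    fix x y
    assume "x \<in> histories n" "y \<in> histories n" "?u x = ?u y"
    show "x = y"
    proof
      fix i
      have "i \<noteq> Suc n \<Longrightarrow> x i = y i"
        using fun_cong[OF \<open>?u x = ?u y\<close>, of i] by simp
      then show "x i = y i"
        using histories_not_Suc \<open>x \<in> histories n\<close> \<open>y \<in> histories n\<close> by (cases "i = Suc n") auto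
    qed
  qed
  then have "(\<Sum>x\<in>?u ` histories n. h x) = (\<Sum>x\<in>histories n. h (?u x))"
    by (simp add: sum.reindex)
  then show ?thesis
    unfolding histories_Suc
    by (simp add: sum.union_disjoint finite_histories disjoint sum.distrib)
qed

(* w n x is the probability of the history x up to time n, and lam (Suc n) x the conditional
   probability of an arrival at time n + 1 given x. *)
locale history_chain =
  fixes w lam :: "nat \<Rightarrow> (nat \<Rightarrow> bool) \<Rightarrow> real"
  assumes w_0: "w 0 (\<lambda>_. False) = 1"
    and w_Suc_False: "\<And>n x. x \<in> histories n \<Longrightarrow> w (Suc n) x = (1 - lam (Suc n) x) * w n x"
    and w_Suc_True: "\<And>n x. x \<in> histories n \<Longrightarrow> w (Suc n) (x(Suc n := True)) = lam (Suc n) x * w n x"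
    and lam_nonneg: "\<And>n x. 0 \<le> lam n x"
    and lam_le_1: "\<And>n x. lam n x \<le> 1"
    and mono_lam: "\<And>n. mono (lam n)"
begin

definition expect :: "nat \<Rightarrow> ((nat \<Rightarrow> bool) \<Rightarrow> real) \<Rightarrow> real" where
  "expect n F = (\<Sum>x\<in>histories n. F x * w n x)"

lemma expect_cong: "(\<And>x. x \<in> histories n \<Longrightarrow> F x = G x) \<Longrightarrow> expect n F = expect n G"
  unfolding expect_def by (auto intro: sum.cong)

lemma expect_cmult: "expect n (\<lambda>x. c * F x) = c * expect n F"
  unfolding expect_def by (simp add: sum_distrib_left mult.assoc)

lemma expect_add: "expect n (\<lambda>x. F x + G x) = expect n F + expect n G"
  unfolding expect_def by (simp add: sum.distrib distrib_right)

lemma expect_uminus: "expect n (\<lambda>x. - F x) = - expect n F"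
  unfolding expect_def by (simp add: sum_negf)

lemma expect_sum: "expect n (\<lambda>x. \<Sum>i\<in>I. F i x) = (\<Sum>i\<in>I. expect n (F i))"
  unfolding expect_def by (simp add: sum_distrib_right sum.swap[of _ I])

lemma expect_Suc:
  "expect (Suc n) F =
     expect n (\<lambda>x. (1 - lam (Suc n) x) * F x + lam (Suc n) x * F (x(Suc n := True)))"
  unfolding expect_def sum_histories_Suc
  by (rule sum.cong) (auto simp: w_Suc_False w_Suc_True algebra_simps)

lemma w_nonneg: "x \<in> histories n \<Longrightarrow> 0 \<le> w n x"
proof (induction n arbitrary: x)
  case 0
  then show ?case by (simp add: histories_0 w_0)
next
  case (Suc n)
  then consider "x \<in> histories n" | y where "y \<in> histories n" "x = y(Suc n := True)"
    by (auto simp: histories_Suc)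
  then show ?case
  proof cases
    case 1
    then show ?thesis
      using Suc.IH w_Suc_False lam_le_1[of "Suc n" x] by simp
  next
    case 2
    then show ?thesis
      unfolding \<open>x = _\<close> w_Suc_True[OF 2(1)]
      using Suc.IH lam_nonneg by simp
  qed
qed

lemma expect_mono: "(\<And>x. x \<in> histories n \<Longrightarrow> F x \<le> G x) \<Longrightarrow> expect n F \<le> expect n G"
  unfolding expect_def by (rule sum_mono) (simp add: mult_right_mono w_nonneg)

lemma expect_const: "expect n (\<lambda>_. c) = c"
proof (induction n)
  case 0
  then show ?case by (simp add: expect_def histories_0 w_0)
next
  case (Suc n)
  then show ?case by (simp add: expect_Suc algebra_simps)
qed

lemma expect_Suc_indep:
  assumes "\<And>x. x \<in> histories n \<Longrightarrow> F (x(Suc n := True)) = F x"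
  shows "expect (Suc n) F = expect n F"
  unfolding expect_Suc by (rule expect_cong) (simp add: assms algebra_simps)

lemma expect_marginal:
  assumes "k \<le> n" and depends: "\<And>x y. (\<forall>i\<le>k. x i = y i) \<Longrightarrow> F x = F y"
  shows "expect n F = expect k F"
  using \<open>k \<le> n\<close>
proof (induction n rule: dec_induct)
  case (step m)
  have "expect (Suc m) F = expect m F"
    by (rule expect_Suc_indep) (rule depends, use step in auto)
  with step show ?case by simp
qed simp

lemma expect_Suc_mult:
  assumes "\<And>x. x \<in> histories n \<Longrightarrow> F (x(Suc n := True)) = F x"
  shows "expect (Suc n) (\<lambda>x. F x * g (x (Suc n))) =
    expect n (\<lambda>x. F x * ((1 - lam (Suc n) x) * g False + lam (Suc n) x * g True))"
  unfolding expect_Suc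
  by (rule expect_cong) (simp add: assms histories_not_Suc algebra_simps)

end

definition arrivals :: "nat \<Rightarrow> (nat \<Rightarrow> bool) \<Rightarrow> real" where
  "arrivals n x = (\<Sum>i\<in>{1..n}. bind01 (x i))"

lemma mono_bind01_coord: "mono (\<lambda>x :: nat \<Rightarrow> bool. bind01 (x i))"
  by (auto intro!: monoI simp: bind01_def le_fun_def)

lemma mono_arrivals: "mono (arrivals n)"
  unfolding arrivals_def using mono_bind01_coord by (auto intro!: monoI sum_mono dest: monoD)

lemma arrivals_0: "arrivals 0 x = 0"
  by (simp add: arrivals_def)

lemma arrivals_Suc: "arrivals (Suc n) x = arrivals n x + bind01 (x (Suc n))"
  by (simp add: arrivals_def)

lemma arrivals_upd: "arrivals n (x(Suc n := b)) = arrivals n x"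
  unfolding arrivals_def by (rule sum.cong) auto

lemma mono_on_exp_mult:
  fixes s :: "'a :: order \<Rightarrow> real" and A :: "'a set"
  assumes "mono s" "0 \<le> t"
  shows "mono_on A (\<lambda>x. exp (t * s x))"
proof (rule monotone_onI)
  fix x y :: 'a
  assume "x \<le> y"
  with \<open>mono s\<close> have "s x \<le> s y"
    by (rule monoD)
  with \<open>0 \<le> t\<close> show "exp (t * s x) \<le> exp (t * s y)"
    by (simp add: mult_left_mono)
qed

lemma antimono_on_exp_mult:
  fixes s :: "'a :: order \<Rightarrow> real" and A :: "'a set"
  assumes "mono s" "t \<le> 0"
  shows "antimono_on A (\<lambda>x. exp (t * s x))"
proof (rule monotone_onI)
  fix x y :: 'a
  assume "x \<le> y"
  with \<open>mono s\<close> have "s x \<le> s y"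
    by (rule monoD)
  with \<open>t \<le> 0\<close> show "exp (t * s y) \<le> exp (t * s x)"
    by (simp add: mult_left_mono_neg)
qed

context history_chain
begin

lemma mono_on_expect_step:
  assumes H: "mono_on (histories (Suc n)) H"
  shows "mono_on (histories n)
           (\<lambda>x. (1 - lam (Suc n) x) * H x + lam (Suc n) x * H (x(Suc n := True)))"
proof (rule mono_onI)
  fix x y :: "nat \<Rightarrow> bool"
  assume x: "x \<in> histories n" and y: "y \<in> histories n" and "x \<le> y"
  let ?u = "\<lambda>x. x(Suc n := True)" and ?l = "lam (Suc n)"
  have hist: "z \<in> histories (Suc n)" "?u z \<in> histories (Suc n)" if "z \<in> histories n" for z
    using that by (simp_all add: histories_Suc)
  have "H x \<le> H y" "H (?u x) \<le> H (?u y)" "H x \<le> H (?u x)"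
    using \<open>x \<le> y\<close> hist[OF x] hist[OF y]
    by (auto intro!: mono_onD[OF H] simp: le_fun_def)
  moreover have "?l x \<le> ?l y"
    using mono_lam \<open>x \<le> y\<close> by (rule monoD)
  ultimately have "0 \<le> (1 - ?l y) * (H y - H x) + ?l y * (H (?u y) - H (?u x))
      + (?l y - ?l x) * (H (?u x) - H x)"
    using lam_nonneg lam_le_1 by (intro add_nonneg_nonneg mult_nonneg_nonneg) auto
  then show "(1 - ?l x) * H x + ?l x * H (?u x) \<le> (1 - ?l y) * H y + ?l y * H (?u y)"
    by (simp add: algebra_simps)
qed

lemma fkg_inequality:
  "mono_on (histories n) F \<Longrightarrow> mono_on (histories n) G \<Longrightarrow>
     expect n F * expect n G \<le> expect n (\<lambda>x. F x * G x)"
proof (induction n arbitrary: F G)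
  case 0
  then show ?case by (simp add: expect_def histories_0 w_0)
next
  case (Suc n)
  let ?u = "\<lambda>x. x(Suc n := True)" and ?l = "lam (Suc n)"
  define F' where "F' x = (1 - ?l x) * F x + ?l x * F (?u x)" for x
  define G' where "G' x = (1 - ?l x) * G x + ?l x * G (?u x)" for x
  have "mono_on (histories n) F'" "mono_on (histories n) G'"
    unfolding F'_def[abs_def] G'_def[abs_def] using Suc.prems by (simp_all add: mono_on_expect_step)
  have "expect (Suc n) F * expect (Suc n) G = expect n F' * expect n G'"
    by (simp only: expect_Suc F'_def[abs_def] G'_def[abs_def])
  also have "\<dots> \<le> expect n (\<lambda>x. F' x * G' x)"
    by (rule Suc.IH) fact+
  also have "\<dots> \<le> expect n (\<lambda>x. (1 - ?l x) * (F x * G x) + ?l x * (F (?u x) * G (?u x)))"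
  proof (rule expect_mono)
    fix x
    assume "x \<in> histories n"
    then have hist: "x \<in> histories (Suc n)" "?u x \<in> histories (Suc n)" and le: "x \<le> ?u x"
      by (auto simp: histories_Suc le_fun_def)
    have "F x \<le> F (?u x)" "G x \<le> G (?u x)"
      by (rule mono_onD[OF Suc.prems(1) hist le], rule mono_onD[OF Suc.prems(2) hist le])
    then have "0 \<le> ?l x * (1 - ?l x) * ((F (?u x) - F x) * (G (?u x) - G x))"
      using lam_nonneg lam_le_1 by (intro mult_nonneg_nonneg) auto
    then show "F' x * G' x \<le> (1 - ?l x) * (F x * G x) + ?l x * (F (?u x) * G (?u x))"
      unfolding F'_def G'_def by (simp add: algebra_simps)
  qed
  also have "\<dots> = expect (Suc n) (\<lambda>x. F x * G x)"
    by (simp add: expect_Suc)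
  finally show ?case .
qed

lemma fkg_inequality_antimono:
  assumes "antimono_on (histories n) F" "antimono_on (histories n) G"
  shows "expect n F * expect n G \<le> expect n (\<lambda>x. F x * G x)"
proof -
  have "mono_on (histories n) (\<lambda>x. - F x)" "mono_on (histories n) (\<lambda>x. - G x)"
    using assms by (auto simp: monotone_on_def)
  from fkg_inequality[OF this] show ?thesis
    by (simp add: expect_uminus)
qed

definition arrival_prob :: "nat \<Rightarrow> real" where
  "arrival_prob n = expect n (lam (Suc n))"

lemma arrival_prob_nonneg: "0 \<le> arrival_prob n"
  using expect_mono[of n "\<lambda>_. 0" "lam (Suc n)"] lam_nonneg
  by (simp add: arrival_prob_def expect_const)

lemma arrival_prob_le_1: "arrival_prob n \<le> 1"
  using expect_mono[of n "lam (Suc n)" "\<lambda>_. 1"] lam_le_1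
  by (simp add: arrival_prob_def expect_const)

lemma expect_coord:
  assumes "1 \<le> i" "i \<le> m"
  shows "expect m (\<lambda>x. bind01 (x i)) = arrival_prob (i - 1)"
proof -
  obtain j where i: "i = Suc j"
    using assms(1) by (cases i) auto
  have "expect m (\<lambda>x. bind01 (x i)) = expect (Suc j) (\<lambda>x. 1 * bind01 (x (Suc j)))"
    using expect_marginal[OF assms(2), of "\<lambda>x. bind01 (x i)"] i by simp
  also have "\<dots> = expect j (\<lambda>x. 1 * ((1 - lam (Suc j) x) * bind01 False + lam (Suc j) x * bind01 True))"
    by (rule expect_Suc_mult) simp
  also have "\<dots> = arrival_prob j"
    by (simp add: arrival_prob_def bind01_def)
  finally show ?thesis
    using i by simp
qed

lemma expect_Suc_exp_coord:
  assumes "\<And>x. x \<in> histories n \<Longrightarrow> F (x(Suc n := True)) = F x"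
  shows "expect (Suc n) (\<lambda>x. F x * exp (t * bind01 (x (Suc n)))) =
    expect n (\<lambda>x. F x * (1 + (exp t - 1) * lam (Suc n) x))"
  using expect_Suc_mult[of n F "\<lambda>b. exp (t * bind01 b)", OF assms]
  by (simp add: bind01_def algebra_simps)

definition mgf :: "nat \<Rightarrow> real \<Rightarrow> real" where
  "mgf n t = expect n (\<lambda>x. exp (t * arrivals n x))"

lemma mgf_0: "mgf 0 t = 1"
  by (simp add: mgf_def arrivals_0 expect_const)

lemma mgf_Suc:
  "mgf (Suc n) t = expect n (\<lambda>x. exp (t * arrivals n x) * (1 + (exp t - 1) * lam (Suc n) x))"
proof -
  have "mgf (Suc n) t = expect (Suc n) (\<lambda>x. exp (t * arrivals n x) * exp (t * bind01 (x (Suc n))))"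
    by (simp add: mgf_def arrivals_Suc distrib_left exp_add)
  also have "\<dots> = expect n (\<lambda>x. exp (t * arrivals n x) * (1 + (exp t - 1) * lam (Suc n) x))"
    by (rule expect_Suc_exp_coord) (simp add: arrivals_upd)
  finally show ?thesis .
qed

lemma mgf_Suc_ge: "mgf n t * (1 + (exp t - 1) * arrival_prob n) \<le> mgf (Suc n) t"
proof -
  let ?F = "\<lambda>x. exp (t * arrivals n x)" and ?G = "\<lambda>x. exp (t * bind01 (x (Suc n)))"
  have F: "expect (Suc n) ?F = mgf n t"
    unfolding mgf_def by (rule expect_Suc_indep) (simp add: arrivals_upd)
  have G: "expect (Suc n) ?G = 1 + (exp t - 1) * arrival_prob n"
    using expect_Suc_exp_coord[of n "\<lambda>_. 1" t]
    by (simp add: expect_add expect_cmult expect_const arrival_prob_def)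
  have FG: "expect (Suc n) (\<lambda>x. ?F x * ?G x) = mgf (Suc n) t"
    by (simp add: mgf_def arrivals_Suc distrib_left exp_add)
  have "expect (Suc n) ?F * expect (Suc n) ?G \<le> expect (Suc n) (\<lambda>x. ?F x * ?G x)"
  proof (cases "0 \<le> t")
    case True
    then show ?thesis
      using mono_arrivals mono_bind01_coord by (intro fkg_inequality mono_on_exp_mult)
  next
    case False
    then show ?thesis
      using mono_arrivals mono_bind01_coord by (intro fkg_inequality_antimono antimono_on_exp_mult) auto
  qed
  then show ?thesis
    unfolding F G FG .
qed

lemma prod_le_mgf: "(\<Prod>k<n. 1 + (exp t - 1) * arrival_prob k) \<le> mgf n t"
proof (induction n)
  case 0
  then show ?case by (simp add: mgf_0)
next
  case (Suc n)
  have "0 \<le> 1 + (exp t - 1) * arrival_prob n"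
    using bernoulli_mgf_pos arrival_prob_nonneg arrival_prob_le_1 less_imp_le by blast
  then have "(\<Prod>k<Suc n. 1 + (exp t - 1) * arrival_prob k)
      \<le> mgf n t * (1 + (exp t - 1) * arrival_prob n)"
    using Suc.IH by (simp add: mult_right_mono)
  also have "\<dots> \<le> mgf (Suc n) t"
    by (rule mgf_Suc_ge)
  finally show ?case .
qed

lemma empty_history: "(\<lambda>_. False) \<in> histories n"
  by (simp add: histories_def)

lemma mgf_le_pow:
  assumes bound: "\<And>n x. x \<in> histories n \<Longrightarrow> 1 + (exp t - 1) * lam (Suc n) x \<le> c"
  shows "mgf n t \<le> c ^ n"
proof (induction n)
  case 0
  then show ?case by (simp add: mgf_0)
next
  case (Suc n)
  have "0 < 1 + (exp t - 1) * lam (Suc 0) (\<lambda>_. False)"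
    using lam_nonneg lam_le_1 by (rule bernoulli_mgf_pos)
  with bound[OF empty_history, of 0] have "0 \<le> c"
    by linarith
  have "mgf (Suc n) t \<le> expect n (\<lambda>x. c * exp (t * arrivals n x))"
    unfolding mgf_Suc using bound by (intro expect_mono) (simp add: mult.commute)
  also have "\<dots> \<le> c * c ^ n"
    using Suc.IH \<open>0 \<le> c\<close> by (simp add: expect_cmult mgf_def[symmetric] mult_left_mono)
  finally show ?case by simp
qed

lemma w_no_arrivals: "w n (\<lambda>_. False) = (\<Prod>k<n. 1 - lam (Suc k) (\<lambda>_. False))"
  by (induction n) (simp_all add: w_0 w_Suc_False[OF empty_history])

lemma w_no_arrivals_le_mgf: "w n (\<lambda>_. False) \<le> mgf n t"
proof -
  have "exp (t * arrivals n (\<lambda>_. False)) * w n (\<lambda>_. False)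
      \<le> (\<Sum>x\<in>histories n. exp (t * arrivals n x) * w n x)"
    using empty_history finite_histories w_nonneg by (intro member_le_sum) auto
  then show ?thesis
    by (simp add: mgf_def expect_def arrivals_def bind01_def)
qed

end

lemma dthp_intensity_mono: "(\<And>i. 0 \<le> a i) \<Longrightarrow> mono (dthp_intensity a n)"
  unfolding dthp_intensity_def bind01_def
  by (auto intro!: monoI add_left_mono sum_mono mult_left_mono simp: le_fun_def)

lemma dthp_intensity_ge: "(\<And>i. 0 \<le> a i) \<Longrightarrow> a 0 \<le> dthp_intensity a n x"
  unfolding dthp_intensity_def bind01_def by (auto intro!: sum_nonneg)

lemma dthp_intensity_le_suminf:
  assumes "\<And>i. 0 \<le> a i" "summable a"
  shows "dthp_intensity a n x \<le> (\<Sum>i. a i)"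
proof -
  have "(\<Sum>i\<in>{1..<n}. a (n - i) * bind01 (x i)) \<le> (\<Sum>i\<in>{1..<n}. a (n + 1 - Suc i))"
    using assms unfolding bind01_def by (intro sum_mono) auto
  also have "\<dots> = (\<Sum>i\<in>{1..<n}. a i)"
    by (rule sum.atLeastLessThan_rev[symmetric])
  also have "\<dots> = (\<Sum>i\<in>{0..<n-1}. a (Suc i))"
    by (cases n) (simp_all add: sum.shift_bounds_Suc_ivl[symmetric])
  also have "\<dots> \<le> (\<Sum>i. a (Suc i))"
    using assms by (intro sum_le_suminf) (auto simp: summable_Suc_iff)
  also have "\<dots> = (\<Sum>i. a i) - a 0"
    using assms(2) by (rule suminf_split_head)
  finally show ?thesis
    unfolding dthp_intensity_def by simp
qed

lemma dthp_intensity_no_arrivals: "dthp_intensity a n (\<lambda>_. False) = a 0"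
  by (simp add: dthp_intensity_def bind01_def)

locale dthp_chain = history_chain w "dthp_intensity a" for w a
begin

lemma arrival_prob_rec: "arrival_prob m = a 0 + (\<Sum>k<m. a (m - k) * arrival_prob k)"
proof -
  have "arrival_prob m = expect m (\<lambda>x. a 0 + (\<Sum>i\<in>{1..<Suc m}. a (Suc m - i) * bind01 (x i)))"
    unfolding arrival_prob_def dthp_intensity_def ..
  also have "\<dots> = a 0 + (\<Sum>i\<in>{1..<Suc m}. a (Suc m - i) * expect m (\<lambda>x. bind01 (x i)))"
    by (simp add: expect_add expect_const expect_sum expect_cmult)
  also have "\<dots> = a 0 + (\<Sum>i\<in>{Suc 0..<Suc m}. a (Suc m - i) * arrival_prob (i - 1))"
    by (simp add: expect_coord)
  also have "\<dots> = a 0 + (\<Sum>k<m. a (m - k) * arrival_prob k)"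
    by (simp only: sum.shift_bounds_Suc_ivl atLeast0LessThan) simp
  finally show ?thesis .
qed

lemma prod_no_arrivals_le_mgf: "(\<Prod>k<n. 1 - a 0) \<le> mgf n t"
  using w_no_arrivals_le_mgf[of n t] by (simp add: w_no_arrivals dthp_intensity_no_arrivals)

context
  assumes a_nonneg: "\<And>i. 0 \<le> a i" and summable_a: "summable a" and suminf_a_less_1: "(\<Sum>i. a i) < 1"
begin

lemma renewal_arrival_prob: "renewal a arrival_prob"
  using a_nonneg summable_a suminf_a_less_1 arrival_prob_rec by unfold_locales

lemma mgf_pos: "0 < mgf n t"
  using prod_no_arrivals_le_mgf[of n t] renewal.a_0_less_1[OF renewal_arrival_prob]
  by (meson diff_gt_0_iff_gt less_le_trans prod_pos)

context
  fixes t \<Gamma> :: real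
  assumes growth_rate: "(\<lambda>n. ln (mgf n t) / real n) \<longlonglongrightarrow> \<Gamma>"
begin

lemma growth_rate_le_ln_intensity_bound:
  assumes "\<And>n x. x \<in> histories n \<Longrightarrow> 1 + (exp t - 1) * dthp_intensity a (Suc n) x \<le> c"
  shows "\<Gamma> \<le> ln c"
  by (rule growth_rate_le_ln[OF growth_rate mgf_pos mgf_le_pow[OF assms]])

lemma ln_no_arrivals_le_growth_rate: "ln (1 - a 0) \<le> \<Gamma>"
  using renewal.a_0_less_1[OF renewal_arrival_prob]
  by (intro ln_le_growth_rate[OF growth_rate _ _ _ prod_no_arrivals_le_mgf]) auto

lemma ln_pstar_le_growth_rate: "ln (1 + (exp t - 1) * (a 0 / (1 - (\<Sum>i. a (Suc i))))) \<le> \<Gamma>"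
proof -
  interpret renewal a arrival_prob
    by (rule renewal_arrival_prob)
  show ?thesis
  proof (rule ln_le_growth_rate[OF growth_rate _ _ _ prod_le_mgf])
    show "0 < 1 + (exp t - 1) * arrival_prob k" for k
      using arrival_prob_nonneg arrival_prob_le_1 by (rule bernoulli_mgf_pos)
    show "(\<lambda>k. 1 + (exp t - 1) * arrival_prob k) \<longlonglongrightarrow> 1 + (exp t - 1) * (a 0 / (1 - (\<Sum>i. a (Suc i))))"
      unfolding pstar_def[symmetric] by (intro tendsto_intros r_tendsto_pstar)
    show "0 < 1 + (exp t - 1) * (a 0 / (1 - (\<Sum>i. a (Suc i))))"
      unfolding pstar_def[symmetric] using pstar_nonneg less_imp_le[OF pstar_less_1] by (rule bernoulli_mgf_pos)
  qed
qed

end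

end

end

definition history :: "(nat \<Rightarrow> 'w \<Rightarrow> bool) \<Rightarrow> nat \<Rightarrow> 'w \<Rightarrow> nat \<Rightarrow> bool" where
  "history \<xi> n \<omega> = (\<lambda>i. i \<in> {1..n} \<and> \<xi> i \<omega>)"

lemma history_in_histories: "history \<xi> n \<omega> \<in> histories n"
  by (simp add: history_def histories_def)

lemma dthp_H_eq_arrivals: "dthp_H \<xi> n \<omega> = arrivals n (history \<xi> n \<omega>)"
  unfolding dthp_H_def arrivals_def history_def by (rule sum.cong) auto

definition cylinder_prob :: "'w measure \<Rightarrow> (nat \<Rightarrow> 'w \<Rightarrow> bool) \<Rightarrow> nat \<Rightarrow> (nat \<Rightarrow> bool) \<Rightarrow> real" where
  "cylinder_prob M \<xi> n x = measure M {\<omega>\<in>space M. \<forall>i\<in>{1..n}. \<xi> i \<omega> = x i}"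

context
  fixes M :: "'w measure" and a :: "nat \<Rightarrow> real" and \<xi> :: "nat \<Rightarrow> 'w \<Rightarrow> bool"
  assumes dthp: "is_DTHP M a \<xi>"
begin

interpretation prob_space M
  using dthp unfolding is_DTHP_def by blast

lemma measurable_arrival[measurable]: "\<xi> i \<in> measurable M (count_space UNIV)"
  using dthp unfolding is_DTHP_def by blast

lemma cylinder_sets: "finite I \<Longrightarrow> {\<omega>\<in>space M. \<forall>i\<in>I. \<xi> i \<omega> = x i} \<in> sets M"
  by measurable

lemma measure_cylinder_arrival:
  "measure M {\<omega>\<in>space M. (\<forall>i\<in>{1..n}. \<xi> i \<omega> = x i) \<and> \<xi> (Suc n) \<omega>}
     = dthp_intensity a (Suc n) x * cylinder_prob M \<xi> n x"
proof -
  have "\<forall>n\<ge>1. \<forall>x. measure M {\<omega>\<in>space M. (\<forall>i\<in>{1..<n}. \<xi> i \<omega> = x i) \<and> \<xi> n \<omega>}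
      = dthp_intensity a n x * measure M {\<omega>\<in>space M. \<forall>i\<in>{1..<n}. \<xi> i \<omega> = x i}"
    using dthp unfolding is_DTHP_def by blast
  from this[rule_format, of "Suc n" x] show ?thesis
    by (simp add: cylinder_prob_def atLeastLessThanSuc_atLeastAtMost)
qed

lemma cylinder_prob_0: "cylinder_prob M \<xi> 0 x = 1"
  by (simp add: cylinder_prob_def prob_space)

lemma cylinder_prob_Suc_True:
  "cylinder_prob M \<xi> (Suc n) (x(Suc n := True)) = dthp_intensity a (Suc n) x * cylinder_prob M \<xi> n x"
proof -
  have "{\<omega>\<in>space M. \<forall>i\<in>{1..Suc n}. \<xi> i \<omega> = (x(Suc n := True)) i}
      = {\<omega>\<in>space M. (\<forall>i\<in>{1..n}. \<xi> i \<omega> = x i) \<and> \<xi> (Suc n) \<omega>}"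
    by (auto simp: atLeastAtMostSuc_conv)
  then show ?thesis
    using measure_cylinder_arrival by (simp add: cylinder_prob_def)
qed

lemma cylinder_prob_Suc_False:
  assumes "\<not> x (Suc n)"
  shows "cylinder_prob M \<xi> (Suc n) x = (1 - dthp_intensity a (Suc n) x) * cylinder_prob M \<xi> n x"
proof -
  let ?A = "{\<omega>\<in>space M. \<forall>i\<in>{1..n}. \<xi> i \<omega> = x i}"
  let ?B = "{\<omega>\<in>space M. (\<forall>i\<in>{1..n}. \<xi> i \<omega> = x i) \<and> \<xi> (Suc n) \<omega>}"
  have "{\<omega>\<in>space M. \<forall>i\<in>{1..Suc n}. \<xi> i \<omega> = x i} = ?A - ?B"
    using assms by (auto simp: atLeastAtMostSuc_conv)
  moreover have "measure M (?A - ?B) = measure M ?A - measure M ?B"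
    using cylinder_sets[of "{1..n}"] by (intro finite_measure_Diff) auto
  ultimately show ?thesis
    using measure_cylinder_arrival by (simp add: cylinder_prob_def algebra_simps)
qed

lemma integral_history:
  "integral\<^sup>L M (\<lambda>\<omega>. F (history \<xi> n \<omega>)) = (\<Sum>x\<in>histories n. F x * cylinder_prob M \<xi> n x)"
proof -
  define A where "A x = {\<omega>\<in>space M. \<forall>i\<in>{1..n}. \<xi> i \<omega> = x i}" for x
  have A_sets: "A x \<in> sets M" for x
    unfolding A_def by (rule cylinder_sets) simp
  have A_space: "A x \<inter> space M = A x" for x
    by (auto simp: A_def)
  have "\<omega> \<in> A x \<longleftrightarrow> x = history \<xi> n \<omega>" if "x \<in> histories n" "\<omega> \<in> space M" for x \<omega>
    using that by (auto simp: A_def history_def histories_def fun_eq_iff)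
  then have "F (history \<xi> n \<omega>) = (\<Sum>x\<in>histories n. F x * indicator (A x) \<omega>)"
    if "\<omega> \<in> space M" for \<omega>
    using that history_in_histories[of \<xi> n \<omega>] finite_histories[of n]
    by (simp add: indicator_def if_distrib cong: sum.cong)
  then have "integral\<^sup>L M (\<lambda>\<omega>. F (history \<xi> n \<omega>))
      = integral\<^sup>L M (\<lambda>\<omega>. \<Sum>x\<in>histories n. F x * indicator (A x) \<omega>)"
    by (intro Bochner_Integration.integral_cong) auto
  also have "\<dots> = (\<Sum>x\<in>histories n. integral\<^sup>L M (\<lambda>\<omega>. F x * indicator (A x) \<omega>))"
    using A_sets
    by (intro Bochner_Integration.integral_sum integrable_mult_right integrable_real_indicator)
      (auto simp: less_top[symmetric])
  also have "\<dots> = (\<Sum>x\<in>histories n. F x * measure M (A x))"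
    by (simp add: A_space)
  finally show ?thesis
    by (simp add: A_def cylinder_prob_def)
qed

lemma dthp_chain_cylinder_prob:
  assumes "\<And>i. 0 \<le> a i" "summable a" "(\<Sum>i. a i) \<le> 1"
  shows "dthp_chain (cylinder_prob M \<xi>) a"
proof
  show "cylinder_prob M \<xi> 0 (\<lambda>_. False) = 1"
    by (rule cylinder_prob_0)
  fix n x y
  show "x \<in> histories n \<Longrightarrow>
      cylinder_prob M \<xi> (Suc n) x = (1 - dthp_intensity a (Suc n) x) * cylinder_prob M \<xi> n x"
    by (intro cylinder_prob_Suc_False histories_not_Suc)
  show "cylinder_prob M \<xi> (Suc n) (x(Suc n := True)) = dthp_intensity a (Suc n) x * cylinder_prob M \<xi> n x"
    by (rule cylinder_prob_Suc_True)
  show "0 \<le> dthp_intensity a n x"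
    using dthp_intensity_ge[of a n x] assms(1) order.trans by blast
  show "dthp_intensity a n x \<le> 1"
    using dthp_intensity_le_suminf[of a n x, OF assms(1,2)] assms(3) by linarith
  show "mono (dthp_intensity a n)"
    using assms(1) by (rule dthp_intensity_mono)
qed

end

theorem theorem4p9:
  fixes M :: "'w measure" and a :: "nat \<Rightarrow> real" and \<xi> :: "nat \<Rightarrow> 'w \<Rightarrow> bool"
    and t \<Gamma> :: real
  assumes pos: "\<And>i. a i > 0"
    and summ: "summable a" and lt1: "(\<Sum>i. a i) < 1"
    and summ_i: "summable (\<lambda>i. real i * a i)"
    and dthp: "is_DTHP M a \<xi>"
    and Gamma: "(\<lambda>n. ln (integral\<^sup>L M (\<lambda>\<omega>. exp (t * dthp_H \<xi> n \<omega>))) / real n)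
                  \<longlonglongrightarrow> \<Gamma>"
  defines "pstar \<equiv> a 0 / (1 - (\<Sum>i. a (Suc i)))"
  shows "(t \<ge> 0 \<longrightarrow>
            ln (1 + (exp t - 1) * pstar) \<le> \<Gamma> \<and> \<Gamma> \<le> ln (1 + (exp t - 1) * (\<Sum>i. a i)))
       \<and> (t < 0 \<longrightarrow>
            max (ln (1 + (exp t - 1) * pstar)) (ln (1 - a 0)) \<le> \<Gamma> \<and>
            \<Gamma> \<le> ln (1 + (exp t - 1) * a 0))"
proof -
  have a_nonneg: "\<And>i. 0 \<le> a i"
    using pos less_imp_le by blast
  interpret dthp_chain "cylinder_prob M \<xi>" a
    using dthp_chain_cylinder_prob[OF dthp a_nonneg summ] lt1 by simp
  have "integral\<^sup>L M (\<lambda>\<omega>. exp (t * dthp_H \<xi> n \<omega>)) = mgf n t" for n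
    using integral_history[OF dthp, of "\<lambda>x. exp (t * arrivals n x)" n]
    by (simp add: dthp_H_eq_arrivals mgf_def expect_def)
  with Gamma have Gamma_mgf: "(\<lambda>n. ln (mgf n t) / real n) \<longlonglongrightarrow> \<Gamma>"
    by simp
  note growth_rate_facts = a_nonneg summ lt1 Gamma_mgf
  have "\<Gamma> \<le> ln (1 + (exp t - 1) * (\<Sum>i. a i))" if "0 \<le> t"
    using that dthp_intensity_le_suminf[OF a_nonneg summ]
    by (intro growth_rate_le_ln_intensity_bound[OF growth_rate_facts]) (simp add: mult_left_mono)
  moreover have "\<Gamma> \<le> ln (1 + (exp t - 1) * a 0)" if "t < 0"
    using that dthp_intensity_ge[OF a_nonneg]
    by (intro growth_rate_le_ln_intensity_bound[OF growth_rate_facts]) (simp add: mult_left_mono_neg)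
  ultimately show ?thesis
    using ln_pstar_le_growth_rate[OF growth_rate_facts] ln_no_arrivals_le_growth_rate[OF growth_rate_facts]
    unfolding pstar_def by auto
qed

end
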